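(* Let $K=3$ and let $l\ge m\ge 2$ be integers. Then \[ h(l,\,m,\,0)\ \le\ h(l-1,\,m-1,\,2). \]
   Context: For a vector $\vec n=(n_1,n_2,n_3)$ of nonnegative integers, the following random process is run: stocks start at $\vec n^{(0)}=\vec n$; at each step $t=1,2,\dots$, as long as at least two coordinates of $\vec n^{(t-1)}$ are nonzero, an index $i$ is chosen uniformly at random (independently of the past) among the indices with $n_i^{(t-1)}>0$, and $\vec n^{(t)}=\vec n^{(t-1)}-\vec e_i$ ($\vec e_i$ the $i$-th standard unit vector). The process stops at the first time $T$ at which at most one coordinate is nonzero, and $h(\vec n)=\mathbb{E}[T]$. Equivalently, with $\operatorname{support}(\vec n)=\{i:n_i\ne 0\}$: $h(\vec n)=0$ if $|\operatorname{support}(\vec n)|\le1$, and otherwise $h(\vec n)=1+\frac{1}{|\operatorname{support}(\vec n)|}\sum_{i\in\operatorname{support}(\vec n)}h(\vec n-\vec e_i)$. *)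

theory Defs
  imports Complex_Main
begin

text \<open>Expected stopping time h for K = 3 stocks, vector (n1, n2, n3).\<close>

definition supp3 :: "nat \<Rightarrow> nat \<Rightarrow> nat \<Rightarrow> nat set" where
  "supp3 n1 n2 n3 = {i \<in> {1, 2, 3}. (if i = 1 then n1 else if i = 2 then n2 else n3) \<noteq> 0}"

function h :: "nat \<Rightarrow> nat \<Rightarrow> nat \<Rightarrow> real" where
  "h n1 n2 n3 =
     (if card (supp3 n1 n2 n3) \<le> 1 then 0
      else 1 + (1 / real (card (supp3 n1 n2 n3))) *
        ((if n1 \<noteq> 0 then h (n1 - 1) n2 n3 else 0)
       + (if n2 \<noteq> 0 then h n1 (n2 - 1) n3 else 0)
       + (if n3 \<noteq> 0 then h n1 n2 (n3 - 1) else 0)))"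
  by pat_completeness auto
termination
  by (relation "measure (\<lambda>(a, b, c). a + b + c)") auto

end

theory Submission
  imports Defs
begin

text \<open>
  The two-stock recursion h(a+1,b+1,0) = 1 + (h(a,b+1,0) + h(a+1,b,0))/2 is compared with the
  three-stock recursion by a symmetric induction on (a,b), proving in turn
  h(a+1,b+1,0) \<le> 2 + h(a,b,0), then h(a+1,b+1,0) \<le> 1 + h(a,b,1), and finally
  h(a+1,b+1,0) \<le> h(a,b,2) for (a,b) \<noteq> (0,0).  In the last two steps the left side averages two
  values bounded by the induction hypotheses, the right side averages the same two bounds and a
  third value controlled by the previous inequality, so the bound is a convex combination with
  weights 2/3 and 1/3.  On the edge b = 0 the last inequality reads h(a+2,1,0) \<le> h(a+1,2,0).
\<close>

declare h.simps [simp del]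

lemma card_supp3:
  "card (supp3 a b c) = of_bool (a \<noteq> 0) + of_bool (b \<noteq> 0) + of_bool (c \<noteq> 0)"
proof -
  have "supp3 a b c = (if a \<noteq> 0 then {1} else {}) \<union> (if b \<noteq> 0 then {2} else {})
      \<union> (if c \<noteq> 0 then {3} else {})"
    by (auto simp: supp3_def)
  then show ?thesis
    by (simp add: card_insert_if)
qed

lemma h_nonneg: "0 \<le> h a b c"
proof (induction a b c rule: h.induct)
  case (1 a b c)
  then show ?case
    by (subst h.simps) (auto intro!: add_nonneg_nonneg)
qed

lemma h_swap_12: "h a b c = h b a c"
proof (induction a b c rule: h.induct)
  case (1 a b c)
  then show ?case
    by (subst (1 2) h.simps) (auto simp: card_supp3 ac_simps)
qed

lemma h_swap_23: "h a b c = h a c b"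
proof (induction a b c rule: h.induct)
  case (1 a b c)
  then show ?case
    by (subst (1 2) h.simps) (auto simp: card_supp3 ac_simps)
qed

lemma h_a_0_0 [simp]: "h a 0 0 = 0"
  and h_0_b_0 [simp]: "h 0 b 0 = 0"
  by (subst h.simps; simp add: card_supp3)+

lemma h_Suc_Suc_0: "h (Suc a) (Suc b) 0 = 1 + (h a (Suc b) 0 + h (Suc a) b 0) / 2"
  by (subst h.simps) (simp add: card_supp3)

lemma h_Suc_Suc_Suc:
  "h (Suc a) (Suc b) (Suc c) =
     1 + (h a (Suc b) (Suc c) + h (Suc a) b (Suc c) + h (Suc a) (Suc b) c) / 3"
  by (subst h.simps) (simp add: card_supp3)

lemma symmetric_nat_pair_induct [case_names sym zero step]:
  assumes sym: "\<And>a b. P a b \<Longrightarrow> P b a"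
    and zero: "\<And>b. P 0 b"
    and step: "\<And>a b. P a (Suc b) \<Longrightarrow> P (Suc a) b \<Longrightarrow> P (Suc a) (Suc b)"
  shows "P a b"
proof (induction a arbitrary: b)
  case 0
  show ?case by (rule zero)
next
  case (Suc a)
  note outer_IH = Suc.IH
  show ?case
  proof (induction b)
    case 0
    show ?case using sym zero .
  next
    case (Suc b)
    show ?case using step outer_IH Suc.IH .
  qed
qed

lemma h_Suc_0_le_2: "h (Suc 0) b 0 \<le> 2"
proof (induction b)
  case (Suc b)
  then show ?case by (simp add: h_Suc_Suc_0)
qed simp

lemma h_Suc_Suc_0_le_2_plus: "h (Suc a) (Suc b) 0 \<le> 2 + h a b 0"
proof (induction a b rule: symmetric_nat_pair_induct)
  case (sym a b)
  then show ?case by (simp add: h_swap_12 [of _ "Suc a"] h_swap_12 [of _ a])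
next
  case (zero b)
  show ?case using h_Suc_0_le_2 by simp
next
  case (step a b)
  then show ?case
    unfolding h_Suc_Suc_0 [of "Suc a" "Suc b"] h_Suc_Suc_0 [of a b] add_divide_distrib by linarith
qed

lemma h_Suc_Suc_0_le_1_plus_third_1: "h (Suc a) (Suc b) 0 \<le> 1 + h a b 1"
proof (induction a b rule: symmetric_nat_pair_induct)
  case (sym a b)
  then show ?case by (simp add: h_swap_12 [of _ "Suc a"] h_swap_12 [of _ a])
next
  case (zero b)
  have "h 0 b 1 = h 1 b 0"
    by (metis h_swap_12 h_swap_23)
  then show ?case
    using h_nonneg [of 1 b 0] by (simp add: h_Suc_Suc_0)
next
  case (step a b)
  have "h (Suc a) (Suc b) 1 =
      1 + (h a (Suc b) 1 + h (Suc a) b 1 + h (Suc a) (Suc b) 0) / 3"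
    using h_Suc_Suc_Suc [of a b 0] by simp
  moreover have "h (Suc (Suc a)) (Suc (Suc b)) 0 \<le> 2 + h (Suc a) (Suc b) 0"
    by (rule h_Suc_Suc_0_le_2_plus)
  ultimately show ?case
    using step unfolding h_Suc_Suc_0 [of "Suc a" "Suc b"] add_divide_distrib by linarith
qed

lemma h_Suc_Suc_1_0_le: "h (Suc (Suc a)) 1 0 \<le> h (Suc a) 2 0"
  using h_nonneg [of a 2 0] by (simp add: h_Suc_Suc_0 numeral_2_eq_2)

lemma h_Suc_Suc_0_le_third_2:
  assumes "(a, b) \<noteq> (0, 0)"
  shows "h (Suc a) (Suc b) 0 \<le> h a b 2"
  using assms
proof (induction a b rule: symmetric_nat_pair_induct)
  case (sym a b)
  then show ?case by (auto simp: h_swap_12 [of _ "Suc a"] h_swap_12 [of _ a])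
next
  case (zero b)
  then obtain k where "b = Suc k"
    using not0_implies_Suc by blast
  moreover have "h 0 (Suc k) 2 = h (Suc k) 2 0"
    by (metis h_swap_12 h_swap_23)
  ultimately show ?case
    using h_Suc_Suc_1_0_le [of k] h_swap_12 [of 1] by simp
next
  case (step a b)
  have "h (Suc a) (Suc b) 2 =
      1 + (h a (Suc b) 2 + h (Suc a) b 2 + h (Suc a) (Suc b) 1) / 3"
    using h_Suc_Suc_Suc [of a b 1] by (simp add: numeral_2_eq_2)
  moreover have "h (Suc (Suc a)) (Suc (Suc b)) 0 \<le> 1 + h (Suc a) (Suc b) 1"
    by (rule h_Suc_Suc_0_le_1_plus_third_1)
  ultimately show ?case
    using step unfolding h_Suc_Suc_0 [of "Suc a" "Suc b"] add_divide_distrib by simp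
qed

theorem lemma6:
  fixes l m :: nat
  assumes "l \<ge> m" and "m \<ge> 2"
  shows "h l m 0 \<le> h (l - 1) (m - 1) 2"
proof -
  obtain a b where "l = Suc (Suc a)" and "m = Suc (Suc b)"
    using assms by (metis add_2_eq_Suc le_add_diff_inverse order.trans)
  then show ?thesis
    using h_Suc_Suc_0_le_third_2 [of "Suc a" "Suc b"] by simp
qed

end
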